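(* Define a translation $A\mapsto A_{\neg\neg}$ from formulas of QHC to formulas of intuitionistic predicate calculus QH by recursion: atomic problems (including $\bot$) are unchanged; $0_{\neg\neg}=\bot$; each atomic proposition $p(t_1,\dots,t_n)\ne 0$ is sent to $\neg\neg\bar p(t_1,\dots,t_n)$, where $\bar p$ is a problem variable of the same arity assigned injectively to $p$ (and distinct from the problem variables of QHC); intuitionistic connectives and quantifiers are kept; classical $\land,\to,\forall$ become intuitionistic ($(p\to q)_{\neg\neg}=p_{\neg\neg}\to q_{\neg\neg}$, etc.); classical $\lor,\exists$ become intuitionistic and prefixed by $\neg\neg$: $(p\lor q)_{\neg\neg}=\neg\neg(p_{\neg\neg}\lor q_{\neg\neg})$, $(\exists x\,p)_{\neg\neg}=\neg\neg\exists x\,p_{\neg\neg}$; $(!p)_{\neg\neg}=p_{\neg\neg}$; $(?\alpha)_{\neg\neg}=\neg\neg\alpha_{\neg\neg}$. Then if $A_1,\dots,A_n\vdash_{\mathrm{QHC}} A$, we have $(A_1)_{\neg\neg},\dots,(A_n)_{\neg\neg}\vdash_{\mathrm{QH}} A_{\neg\neg}$.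
   Context: QHC is a two-sorted first-order calculus. Its only terms are individual variables. Every formula is either a problem (denoted by Greek letters $\alpha,\beta,\gamma,\dots$) or a proposition (denoted by Latin letters $p,q,\dots$). Atomic formulas are proposition variables $p(t_1,\dots,t_n)$ (of proposition type), problem variables $\pi(t_1,\dots,t_n)$ (of problem type), and the constants $0$ (a proposition, classical falsity) and $\bot$ (a problem, intuitionistic absurdity). Propositions are closed under the classical connectives $\land,\lor,\to$ and quantifiers $\exists,\forall$; problems are closed under the intuitionistic connectives $\land,\lor,\to$ and quantifiers $\exists,\forall$ (the same symbols are used, distinguished by the type of the arguments). $\neg p$ abbreviates $p\to 0$, $\neg\alpha$ abbreviates $\alpha\to\bot$, and $\leftrightarrow$ is defined as usual. There are two type-conversion operators: if $p$ is a proposition then $!p$ is a problem, and if $\alpha$ is a problem then $?\alpha$ is a proposition. Deductive system of QHC: all axioms and rules of classical predicate logic applied to all propositions; all postulates and rules of intuitionistic predicate logic applied to all problems; the rules $p\,/\,!p$ and $\alpha\,/\,?\alpha$; and the schemas $?!p\to p$; $\alpha\to\, !?\alpha$; $!(p\to q)\to(!p\to !q)$; $?(\alpha\to\beta)\to(?\alpha\to ?\beta)$; $!0\to\bot$; $?(\alpha\land\beta)\leftrightarrow ?\alpha\land ?\beta$; $?(\alpha\lor\beta)\leftrightarrow ?\alpha\lor ?\beta$; $?\bot\to 0$; $?\exists x\,\alpha(x)\leftrightarrow\exists x\,?\alpha(x)$; $?\forall x\,\alpha(x)\to\forall x\,?\alpha(x)$ (usual variable side conditions implicit). $\vdash A$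 means $A$ is derivable in QHC; $A\Rightarrow B$ means $\vdash A\to B$ and $A\Leftrightarrow B$ means $\vdash A\leftrightarrow B$ (with $A,B$ of the same type); $A\vdash B$ means $B$ is derivable in QHC from the premise $A$. Notation: $\Box p := ?!p$ (a proposition) and $\nabla\alpha := !?\alpha$ (a problem). QC and QH denote classical and intuitionistic predicate calculus. *)

theory Defs
  imports Main
begin

section \<open>Syntax of QHC\<close>

text \<open>Individual variables are natural numbers; the only terms are variables.
  Type variable a: names of proposition variables, b: names of problem variables.
  An atomic formula is a name applied to a list of variables (arity = length).\<close>

datatype ('a, 'b) qprop =
    PVar 'a "nat list"
  | Zero
  | PConj "('a, 'b) qprop" "('a, 'b) qprop"
  | PDisj "('a, 'b) qprop" "('a, 'b) qprop"
  | PImp "('a, 'b) qprop" "('a, 'b) qprop"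
  | PEx nat "('a, 'b) qprop"
  | PAll nat "('a, 'b) qprop"
  | Quest "('a, 'b) qprob"
and ('a, 'b) qprob =
    QVar 'b "nat list"
  | Bot
  | QConj "('a, 'b) qprob" "('a, 'b) qprob"
  | QDisj "('a, 'b) qprob" "('a, 'b) qprob"
  | QImp "('a, 'b) qprob" "('a, 'b) qprob"
  | QEx nat "('a, 'b) qprob"
  | QAll nat "('a, 'b) qprob"
  | Bang "('a, 'b) qprop"

datatype ('a, 'b) form = P "('a, 'b) qprop" | Q "('a, 'b) qprob"

definition PNeg where "PNeg p = PImp p Zero"
definition QNeg where "QNeg a = QImp a Bot"
definition PIff where "PIff p q = PConj (PImp p q) (PImp q p)"
definition QIff where "QIff a b = QConj (QImp a b) (QImp b a)"

definition rn :: "nat \<Rightarrow> nat \<Rightarrow> nat \<Rightarrow> nat" where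
  "rn x y v = (if v = x then y else v)"

primrec fvP :: "('a, 'b) qprop \<Rightarrow> nat set" and fvQ :: "('a, 'b) qprob \<Rightarrow> nat set" where
  "fvP (PVar p ts) = set ts"
| "fvP Zero = {}"
| "fvP (PConj p q) = fvP p \<union> fvP q"
| "fvP (PDisj p q) = fvP p \<union> fvP q"
| "fvP (PImp p q) = fvP p \<union> fvP q"
| "fvP (PEx x p) = fvP p - {x}"
| "fvP (PAll x p) = fvP p - {x}"
| "fvP (Quest a) = fvQ a"
| "fvQ (QVar q ts) = set ts"
| "fvQ Bot = {}"
| "fvQ (QConj a b) = fvQ a \<union> fvQ b"
| "fvQ (QDisj a b) = fvQ a \<union> fvQ b"
| "fvQ (QImp a b) = fvQ a \<union> fvQ b"
| "fvQ (QEx x a) = fvQ a - {x}"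
| "fvQ (QAll x a) = fvQ a - {x}"
| "fvQ (Bang p) = fvP p"

text \<open>substP x y A: replace the free occurrences of x by y (no renaming of bound
  variables; used only together with the side condition that y is free for x).\<close>
primrec substP :: "nat \<Rightarrow> nat \<Rightarrow> ('a, 'b) qprop \<Rightarrow> ('a, 'b) qprop"
  and substQ :: "nat \<Rightarrow> nat \<Rightarrow> ('a, 'b) qprob \<Rightarrow> ('a, 'b) qprob" where
  "substP x y (PVar p ts) = PVar p (map (rn x y) ts)"
| "substP x y Zero = Zero"
| "substP x y (PConj p q) = PConj (substP x y p) (substP x y q)"
| "substP x y (PDisj p q) = PDisj (substP x y p) (substP x y q)"
| "substP x y (PImp p q) = PImp (substP x y p) (substP x y q)"
| "substP x y (PEx z p) = (if z = x then PEx z p else PEx z (substP x y p))"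
| "substP x y (PAll z p) = (if z = x then PAll z p else PAll z (substP x y p))"
| "substP x y (Quest a) = Quest (substQ x y a)"
| "substQ x y (QVar q ts) = QVar q (map (rn x y) ts)"
| "substQ x y Bot = Bot"
| "substQ x y (QConj a b) = QConj (substQ x y a) (substQ x y b)"
| "substQ x y (QDisj a b) = QDisj (substQ x y a) (substQ x y b)"
| "substQ x y (QImp a b) = QImp (substQ x y a) (substQ x y b)"
| "substQ x y (QEx z a) = (if z = x then QEx z a else QEx z (substQ x y a))"
| "substQ x y (QAll z a) = (if z = x then QAll z a else QAll z (substQ x y a))"
| "substQ x y (Bang p) = Bang (substP x y p)"

primrec freeforP :: "nat \<Rightarrow> nat \<Rightarrow> ('a, 'b) qprop \<Rightarrow> bool"
  and freeforQ :: "nat \<Rightarrow> nat \<Rightarrow> ('a, 'b) qprob \<Rightarrow> bool" where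
  "freeforP y x (PVar p ts) = True"
| "freeforP y x Zero = True"
| "freeforP y x (PConj p q) = (freeforP y x p \<and> freeforP y x q)"
| "freeforP y x (PDisj p q) = (freeforP y x p \<and> freeforP y x q)"
| "freeforP y x (PImp p q) = (freeforP y x p \<and> freeforP y x q)"
| "freeforP y x (PEx z p) = (z = x \<or> ((z \<noteq> y \<or> x \<notin> fvP p) \<and> freeforP y x p))"
| "freeforP y x (PAll z p) = (z = x \<or> ((z \<noteq> y \<or> x \<notin> fvP p) \<and> freeforP y x p))"
| "freeforP y x (Quest a) = freeforQ y x a"
| "freeforQ y x (QVar q ts) = True"
| "freeforQ y x Bot = True"
| "freeforQ y x (QConj a b) = (freeforQ y x a \<and> freeforQ y x b)"
| "freeforQ y x (QDisj a b) = (freeforQ y x a \<and> freeforQ y x b)"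
| "freeforQ y x (QImp a b) = (freeforQ y x a \<and> freeforQ y x b)"
| "freeforQ y x (QEx z a) = (z = x \<or> ((z \<noteq> y \<or> x \<notin> fvQ a) \<and> freeforQ y x a))"
| "freeforQ y x (QAll z a) = (z = x \<or> ((z \<noteq> y \<or> x \<notin> fvQ a) \<and> freeforQ y x a))"
| "freeforQ y x (Bang p) = freeforP y x p"

section \<open>Deductive system of QHC\<close>

inductive cax :: "('a, 'b) qprop \<Rightarrow> bool" where
  "cax (PImp p (PImp q p))"
| "cax (PImp (PImp p (PImp q r)) (PImp (PImp p q) (PImp p r)))"
| "cax (PImp (PConj p q) p)"
| "cax (PImp (PConj p q) q)"
| "cax (PImp p (PImp q (PConj p q)))"
| "cax (PImp p (PDisj p q))"
| "cax (PImp q (PDisj p q))"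
| "cax (PImp (PImp p r) (PImp (PImp q r) (PImp (PDisj p q) r)))"
| "cax (PImp Zero p)"
| "cax (PImp (PNeg (PNeg p)) p)"
| "freeforP y x p \<Longrightarrow> cax (PImp (PAll x p) (substP x y p))"
| "freeforP y x p \<Longrightarrow> cax (PImp (substP x y p) (PEx x p))"

inductive iax :: "('a, 'b) qprob \<Rightarrow> bool" where
  "iax (QImp a (QImp b a))"
| "iax (QImp (QImp a (QImp b c)) (QImp (QImp a b) (QImp a c)))"
| "iax (QImp (QConj a b) a)"
| "iax (QImp (QConj a b) b)"
| "iax (QImp a (QImp b (QConj a b)))"
| "iax (QImp a (QDisj a b))"
| "iax (QImp b (QDisj a b))"
| "iax (QImp (QImp a c) (QImp (QImp b c) (QImp (QDisj a b) c)))"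
| "iax (QImp Bot a)"
| "freeforQ y x a \<Longrightarrow> iax (QImp (QAll x a) (substQ x y a))"
| "freeforQ y x a \<Longrightarrow> iax (QImp (substQ x y a) (QEx x a))"

inductive qhcax :: "('a, 'b) form \<Rightarrow> bool" where
  "qhcax (P (PImp (Quest (Bang p)) p))"
| "qhcax (Q (QImp a (Bang (Quest a))))"
| "qhcax (Q (QImp (Bang (PImp p q)) (QImp (Bang p) (Bang q))))"
| "qhcax (P (PImp (Quest (QImp a b)) (PImp (Quest a) (Quest b))))"
| "qhcax (Q (QImp (Bang Zero) Bot))"
| "qhcax (P (PIff (Quest (QConj a b)) (PConj (Quest a) (Quest b))))"
| "qhcax (P (PIff (Quest (QDisj a b)) (PDisj (Quest a) (Quest b))))"
| "qhcax (P (PImp (Quest Bot) Zero))"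
| "qhcax (P (PIff (Quest (QEx x a)) (PEx x (Quest a))))"
| "qhcax (P (PImp (Quest (QAll x a)) (PAll x (Quest a))))"

inductive qhc_deriv :: "('a, 'b) form set \<Rightarrow> ('a, 'b) form \<Rightarrow> bool" for G where
  prem: "A \<in> G \<Longrightarrow> qhc_deriv G A"
| cax: "cax p \<Longrightarrow> qhc_deriv G (P p)"
| iax: "iax a \<Longrightarrow> qhc_deriv G (Q a)"
| qhcax: "qhcax A \<Longrightarrow> qhc_deriv G A"
| mpP: "qhc_deriv G (P (PImp p q)) \<Longrightarrow> qhc_deriv G (P p) \<Longrightarrow> qhc_deriv G (P q)"
| mpQ: "qhc_deriv G (Q (QImp a b)) \<Longrightarrow> qhc_deriv G (Q a) \<Longrightarrow> qhc_deriv G (Q b)"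
| allP: "qhc_deriv G (P (PImp p q)) \<Longrightarrow> x \<notin> fvP p \<Longrightarrow> qhc_deriv G (P (PImp p (PAll x q)))"
| exP: "qhc_deriv G (P (PImp q p)) \<Longrightarrow> x \<notin> fvP p \<Longrightarrow> qhc_deriv G (P (PImp (PEx x q) p))"
| allQ: "qhc_deriv G (Q (QImp a b)) \<Longrightarrow> x \<notin> fvQ a \<Longrightarrow> qhc_deriv G (Q (QImp a (QAll x b)))"
| exQ: "qhc_deriv G (Q (QImp b a)) \<Longrightarrow> x \<notin> fvQ a \<Longrightarrow> qhc_deriv G (Q (QImp (QEx x b) a))"
| bang: "qhc_deriv G (P p) \<Longrightarrow> qhc_deriv G (Q (Bang p))"
| quest: "qhc_deriv G (Q a) \<Longrightarrow> qhc_deriv G (P (Quest a))"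

section \<open>Intuitionistic predicate calculus QH\<close>

datatype 'c hform =
    HVar 'c "nat list"
  | HBot
  | HConj "'c hform" "'c hform"
  | HDisj "'c hform" "'c hform"
  | HImp "'c hform" "'c hform"
  | HEx nat "'c hform"
  | HAll nat "'c hform"

definition HNeg where "HNeg a = HImp a HBot"

primrec fvH :: "'c hform \<Rightarrow> nat set" where
  "fvH (HVar q ts) = set ts"
| "fvH HBot = {}"
| "fvH (HConj a b) = fvH a \<union> fvH b"
| "fvH (HDisj a b) = fvH a \<union> fvH b"
| "fvH (HImp a b) = fvH a \<union> fvH b"
| "fvH (HEx x a) = fvH a - {x}"
| "fvH (HAll x a) = fvH a - {x}"

primrec substH :: "nat \<Rightarrow> nat \<Rightarrow> 'c hform \<Rightarrow> 'c hform" where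
  "substH x y (HVar q ts) = HVar q (map (rn x y) ts)"
| "substH x y HBot = HBot"
| "substH x y (HConj a b) = HConj (substH x y a) (substH x y b)"
| "substH x y (HDisj a b) = HDisj (substH x y a) (substH x y b)"
| "substH x y (HImp a b) = HImp (substH x y a) (substH x y b)"
| "substH x y (HEx z a) = (if z = x then HEx z a else HEx z (substH x y a))"
| "substH x y (HAll z a) = (if z = x then HAll z a else HAll z (substH x y a))"

primrec freeforH :: "nat \<Rightarrow> nat \<Rightarrow> 'c hform \<Rightarrow> bool" where
  "freeforH y x (HVar q ts) = True"
| "freeforH y x HBot = True"
| "freeforH y x (HConj a b) = (freeforH y x a \<and> freeforH y x b)"
| "freeforH y x (HDisj a b) = (freeforH y x a \<and> freeforH y x b)"
| "freeforH y x (HImp a b) = (freeforH y x a \<and> freeforH y x b)"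
| "freeforH y x (HEx z a) = (z = x \<or> ((z \<noteq> y \<or> x \<notin> fvH a) \<and> freeforH y x a))"
| "freeforH y x (HAll z a) = (z = x \<or> ((z \<noteq> y \<or> x \<notin> fvH a) \<and> freeforH y x a))"

inductive hax :: "'c hform \<Rightarrow> bool" where
  "hax (HImp a (HImp b a))"
| "hax (HImp (HImp a (HImp b c)) (HImp (HImp a b) (HImp a c)))"
| "hax (HImp (HConj a b) a)"
| "hax (HImp (HConj a b) b)"
| "hax (HImp a (HImp b (HConj a b)))"
| "hax (HImp a (HDisj a b))"
| "hax (HImp b (HDisj a b))"
| "hax (HImp (HImp a c) (HImp (HImp b c) (HImp (HDisj a b) c)))"
| "hax (HImp HBot a)"
| "freeforH y x a \<Longrightarrow> hax (HImp (HAll x a) (substH x y a))"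
| "freeforH y x a \<Longrightarrow> hax (HImp (substH x y a) (HEx x a))"

inductive qh_deriv :: "'c hform set \<Rightarrow> 'c hform \<Rightarrow> bool" for G where
  prem: "A \<in> G \<Longrightarrow> qh_deriv G A"
| ax: "hax a \<Longrightarrow> qh_deriv G a"
| mp: "qh_deriv G (HImp a b) \<Longrightarrow> qh_deriv G a \<Longrightarrow> qh_deriv G b"
| all: "qh_deriv G (HImp a b) \<Longrightarrow> x \<notin> fvH a \<Longrightarrow> qh_deriv G (HImp a (HAll x b))"
| ex: "qh_deriv G (HImp b a) \<Longrightarrow> x \<notin> fvH a \<Longrightarrow> qh_deriv G (HImp (HEx x b) a)"

section \<open>The translation A \<mapsto> A_{\<not>\<not>}\<close>

text \<open>QH problem variables are named by b + a: Inl \<pi> is the QHC problem variable \<pi>,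
  Inr p is the new problem variable p-bar (injective in p, disjoint from the Inl names,
  same arity since it is applied to the same argument list).\<close>
primrec nnP :: "('a, 'b) qprop \<Rightarrow> ('b + 'a) hform"
  and nnQ :: "('a, 'b) qprob \<Rightarrow> ('b + 'a) hform" where
  "nnP (PVar p ts) = HNeg (HNeg (HVar (Inr p) ts))"
| "nnP Zero = HBot"
| "nnP (PConj p q) = HConj (nnP p) (nnP q)"
| "nnP (PDisj p q) = HNeg (HNeg (HDisj (nnP p) (nnP q)))"
| "nnP (PImp p q) = HImp (nnP p) (nnP q)"
| "nnP (PEx x p) = HNeg (HNeg (HEx x (nnP p)))"
| "nnP (PAll x p) = HAll x (nnP p)"
| "nnP (Quest a) = HNeg (HNeg (nnQ a))"
| "nnQ (QVar q ts) = HVar (Inl q) ts"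
| "nnQ Bot = HBot"
| "nnQ (QConj a b) = HConj (nnQ a) (nnQ b)"
| "nnQ (QDisj a b) = HDisj (nnQ a) (nnQ b)"
| "nnQ (QImp a b) = HImp (nnQ a) (nnQ b)"
| "nnQ (QEx x a) = HEx x (nnQ a)"
| "nnQ (QAll x a) = HAll x (nnQ a)"
| "nnQ (Bang p) = nnP p"

fun nnF :: "('a, 'b) form \<Rightarrow> ('b + 'a) hform" where
  "nnF (P p) = nnP p"
| "nnF (Q a) = nnQ a"

end

theory Submission imports Defs begin

(* The proof is an induction on QHC derivations, resting on three groups of facts.
   (1) A natural-deduction layer over QH: derivability from the premises G plus
       dischargeable local hypotheses, with the deduction theorem, and a
       few derived QH theorems such as instantiation of a quantifier by its own
       variable.
   (2) Stability: every translated proposition c satisfies NN c -> c.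
       Stable formulas include bot and all NN a, and are closed under conjunction,
       implication (stable consequent) and universal quantification; this is why the
       classical disjunction, existential quantifier, atoms and ? get a NN-prefix.
       Double negation commutes with the connectives; these laws are the
       translations of the QHC schemas for ?, and stability of the conclusion
       validates the translated classical elimination rules for disjunction and
       the existential quantifier.
   (3) The translation commutes with free variables, substitution and the free-for
       condition, so translated axiom instances are instances again. *)

abbreviation NN :: "'c hform \<Rightarrow> 'c hform" where
  "NN a \<equiv> HNeg (HNeg a)"

abbreviation HIff :: "'c hform \<Rightarrow> 'c hform \<Rightarrow> 'c hform" where
  "HIff a b \<equiv> HConj (HImp a b) (HImp b a)"

lemma fvH_HNeg [simp]: "fvH (HNeg a) = fvH a"
  by (simp add: HNeg_def)

section \<open>Natural deduction over QH\<close>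

text \<open>nd G H a: a is derivable in QH from the premises G together with the local
  hypotheses H; unlike the premises, the hypotheses can be discharged.\<close>

inductive nd :: "'c hform set \<Rightarrow> 'c hform set \<Rightarrow> 'c hform \<Rightarrow> bool" for G where
  hyp: "a \<in> H \<Longrightarrow> nd G H a"
| qh: "qh_deriv G a \<Longrightarrow> nd G H a"
| mp: "nd G H (HImp a b) \<Longrightarrow> nd G H a \<Longrightarrow> nd G H b"

lemma nd_closed: "nd G {} a \<Longrightarrow> qh_deriv G a"
  by (induction "{} :: 'a hform set" a rule: nd.induct) (auto intro: qh_deriv.mp)

lemma nd_weaken: "nd G H a \<Longrightarrow> H \<subseteq> H' \<Longrightarrow> nd G H' a"
  by (induction rule: nd.induct) (auto intro: nd.intros)

lemma nd_ax: "hax a \<Longrightarrow> nd G H a"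
  by (intro nd.qh qh_deriv.ax)

lemma qh_id: "qh_deriv G (HImp a a)"
proof -
  have "qh_deriv G (HImp (HImp a (HImp (HImp a a) a)) (HImp (HImp a (HImp a a)) (HImp a a)))"
    and "qh_deriv G (HImp a (HImp (HImp a a) a))"
    and "qh_deriv G (HImp a (HImp a a))"
    by (intro qh_deriv.ax hax.intros)+
  then show ?thesis by (blast intro: qh_deriv.mp)
qed

text \<open>The deduction theorem, proved from the axioms K and S.\<close>

lemma nd_impI: "nd G (insert h H) b \<Longrightarrow> nd G H (HImp h b)"
proof (induction "insert h H" b rule: nd.induct)
  case (hyp a)
  show ?case
  proof (cases "a = h")
    case True
    then show ?thesis by (simp add: nd.qh qh_id)
  next
    case False
    with hyp have "a \<in> H" by simp
    then show ?thesis by (intro nd.mp[OF nd_ax[OF hax.intros(1)]] nd.hyp)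
  qed
next
  case (qh a)
  then show ?case by (intro nd.mp[OF nd_ax[OF hax.intros(1)]] nd.qh)
next
  case (mp a b)
  then show ?case by (meson nd.mp nd_ax hax.intros(2))
qed

lemma qh_impI: "nd G {a} b \<Longrightarrow> qh_deriv G (HImp a b)"
  by (rule nd_closed, rule nd_impI)

lemma nd_conjI: "nd G H a \<Longrightarrow> nd G H b \<Longrightarrow> nd G H (HConj a b)"
  by (rule nd.mp[OF nd.mp[OF nd_ax[OF hax.intros(5)]]])

lemma nd_conjE1: "nd G H (HConj a b) \<Longrightarrow> nd G H a"
  by (rule nd.mp[OF nd_ax[OF hax.intros(3)]])

lemma nd_conjE2: "nd G H (HConj a b) \<Longrightarrow> nd G H b"
  by (rule nd.mp[OF nd_ax[OF hax.intros(4)]])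

lemma nd_negI: "nd G (insert a H) HBot \<Longrightarrow> nd G H (HNeg a)"
  unfolding HNeg_def by (rule nd_impI)

lemma nd_negE: "nd G H (HNeg a) \<Longrightarrow> nd G H a \<Longrightarrow> nd G H HBot"
  unfolding HNeg_def by (rule nd.mp)

lemma nd_nn_elim:
  assumes "nd G (insert a H) HBot" and "nd G H (NN a)"
  shows "nd G H HBot"
  using nd_negE[OF assms(2) nd_negI[OF assms(1)]] .

lemma qh_trans: "qh_deriv G (HImp a b) \<Longrightarrow> qh_deriv G (HImp b c) \<Longrightarrow> qh_deriv G (HImp a c)"
  by (rule qh_impI) (meson insertI1 nd.hyp nd.mp nd.qh)

lemma qh_disjE: "qh_deriv G (HImp a c) \<Longrightarrow> qh_deriv G (HImp b c) \<Longrightarrow> qh_deriv G (HImp (HDisj a b) c)"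
  by (rule qh_deriv.mp[OF qh_deriv.mp[OF qh_deriv.ax[OF hax.intros(8)]]])

lemma qh_conjI: "qh_deriv G a \<Longrightarrow> qh_deriv G b \<Longrightarrow> qh_deriv G (HConj a b)"
  by (rule nd_closed, rule nd_conjI) (simp_all add: nd.qh)

text \<open>Instantiating a quantifier by its own variable; these are the cases y = x of
  the quantifier axioms.\<close>

lemma substH_same: "substH x x a = a"
proof -
  have "map (rn x x) ts = ts" for ts
    by (induct ts) (auto simp: rn_def)
  then show ?thesis
    by (induct a) auto
qed

lemma freeforH_same: "freeforH x x a"
  by (induct a) auto

lemma all_ax: "freeforH y x a \<Longrightarrow> qh_deriv G (HImp (HAll x a) (substH x y a))"
  and ex_ax: "freeforH y x a \<Longrightarrow> qh_deriv G (HImp (substH x y a) (HEx x a))"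
  by (intro qh_deriv.ax hax.intros, assumption)+

lemma all_inst: "qh_deriv G (HImp (HAll x a) a)"
  using all_ax[OF freeforH_same] unfolding substH_same .

lemma ex_inst: "qh_deriv G (HImp a (HEx x a))"
  using ex_ax[OF freeforH_same] unfolding substH_same .

section \<open>Double negation and stability\<close>

lemma nd_nn_mono:
  assumes ab: "nd G H (HImp a b)" and nna: "nd G H (NN a)"
  shows "nd G H (NN b)"
proof (rule nd_negI)
  let ?H = "insert (HNeg b) H"
  have "nd G (insert a ?H) b"
    by (rule nd.mp[OF nd_weaken[OF ab]]) (auto intro: nd.hyp)
  then have "nd G (insert a ?H) HBot"
    by (rule nd_negE[rotated]) (simp add: nd.hyp)
  moreover have "nd G ?H (NN a)"
    using nna by (rule nd_weaken) blast
  ultimately show "nd G ?H HBot"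
    by (rule nd_nn_elim)
qed

lemma qh_nn_mono: "qh_deriv G (HImp a b) \<Longrightarrow> qh_deriv G (HImp (NN a) (NN b))"
  by (rule qh_impI, rule nd_nn_mono[of _ _ a]) (simp_all add: nd.qh nd.hyp)

lemma dn_intro: "qh_deriv G (HImp a (NN a))"
  by (intro qh_impI nd_negI, rule nd_negE[of _ _ a]) (simp_all add: nd.hyp)

lemma qh_dn_intro: "qh_deriv G a \<Longrightarrow> qh_deriv G (NN a)"
  by (rule qh_deriv.mp[OF dn_intro])

definition nn_stable :: "'c hform set \<Rightarrow> 'c hform \<Rightarrow> bool" where
  "nn_stable G a \<longleftrightarrow> qh_deriv G (HImp (NN a) a)"

lemma nd_stable: "nn_stable G a \<Longrightarrow> nd G H (NN a) \<Longrightarrow> nd G H a"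
  unfolding nn_stable_def by (rule nd.mp[OF nd.qh])

lemma nn_stable_elim: "nn_stable G c \<Longrightarrow> qh_deriv G (HImp a c) \<Longrightarrow> qh_deriv G (HImp (NN a) c)"
  unfolding nn_stable_def by (rule qh_trans[OF qh_nn_mono])

lemma nn_stable_NN: "nn_stable G (NN a)"
  unfolding nn_stable_def
proof (intro qh_impI nd_negI)
  let ?H = "{HNeg a, NN (NN a)}"
  have "nd G (insert (NN a) ?H) HBot"
    by (rule nd_negE[of _ _ "HNeg a"]) (simp_all add: nd.hyp)
  then show "nd G ?H HBot"
    by (rule nd_nn_elim) (simp add: nd.hyp)
qed

lemma nn_stable_bot: "nn_stable G HBot"
  unfolding nn_stable_def
  by (intro qh_impI, rule nd_negE[of _ _ "HNeg HBot"]) (simp_all add: nd.hyp nd.qh qh_id HNeg_def)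

lemma nn_stable_conj:
  assumes "nn_stable G a" and "nn_stable G b"
  shows "nn_stable G (HConj a b)"
  unfolding nn_stable_def
proof (rule qh_impI)
  have nn: "nd G {NN (HConj a b)} (NN (HConj a b))"
    by (simp add: nd.hyp)
  have "nd G {NN (HConj a b)} a"
    using nd_nn_mono[OF nd_ax[OF hax.intros(3)] nn] by (rule nd_stable[OF assms(1)])
  moreover have "nd G {NN (HConj a b)} b"
    using nd_nn_mono[OF nd_ax[OF hax.intros(4)] nn] by (rule nd_stable[OF assms(2)])
  ultimately show "nd G {NN (HConj a b)} (HConj a b)"
    by (rule nd_conjI)
qed

lemma nn_stable_imp:
  assumes "nn_stable G b"
  shows "nn_stable G (HImp a b)"
  unfolding nn_stable_def
proof (intro qh_impI nd_impI)
  let ?H = "{a, NN (HImp a b)}"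
  let ?K = "insert (HImp a b) (insert (HNeg b) ?H)"
  have "nd G ?K b"
    by (rule nd.mp[of _ _ a]) (simp_all add: nd.hyp)
  then have "nd G ?K HBot"
    by (rule nd_negE[rotated]) (simp add: nd.hyp)
  then have "nd G (insert (HNeg b) ?H) HBot"
    by (rule nd_nn_elim) (simp add: nd.hyp)
  then show "nd G ?H b"
    by (rule nd_stable[OF assms nd_negI])
qed

lemma nn_stable_all:
  assumes "nn_stable G a"
  shows "nn_stable G (HAll x a)"
proof -
  have "qh_deriv G (HImp (NN (HAll x a)) a)"
    using assms all_inst by (rule nn_stable_elim)
  then show ?thesis
    unfolding nn_stable_def by (rule qh_deriv.all) simp
qed

section \<open>Double negation commutes with the connectives\<close>

text \<open>These are the translations of the QHC schemas for ?: double negation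
  distributes over \<rightarrow>, \<and>, \<or>, \<exists> and (in one direction) \<forall>.\<close>

lemma nn_imp: "qh_deriv G (HImp (NN (HImp a b)) (HImp (NN a) (NN b)))"
proof (intro qh_impI nd_impI nd_negI)
  let ?H = "{HNeg b, NN a, NN (HImp a b)}"
  have "nd G (insert a (insert (HImp a b) ?H)) b"
    by (rule nd.mp[of _ _ a]) (simp_all add: nd.hyp)
  then have "nd G (insert a (insert (HImp a b) ?H)) HBot"
    by (rule nd_negE[rotated]) (simp add: nd.hyp)
  then have "nd G (insert (HImp a b) ?H) HBot"
    by (rule nd_nn_elim) (simp add: nd.hyp)
  then show "nd G ?H HBot"
    by (rule nd_nn_elim) (simp add: nd.hyp)
qed

lemma nn_conj: "qh_deriv G (HIff (NN (HConj a b)) (HConj (NN a) (NN b)))"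
proof (rule qh_conjI)
  show "qh_deriv G (HImp (NN (HConj a b)) (HConj (NN a) (NN b)))"
    by (intro qh_impI nd_conjI; rule nd_nn_mono[of _ _ "HConj a b"])
       (simp_all add: nd.hyp nd_ax hax.intros)
  have "qh_deriv G (HImp (NN a) (NN (HImp b (HConj a b))))"
    by (intro qh_nn_mono qh_deriv.ax hax.intros)
  then show "qh_deriv G (HImp (HConj (NN a) (NN b)) (NN (HConj a b)))"
  proof (intro qh_impI)
    assume nna_nnab: "qh_deriv G (HImp (NN a) (NN (HImp b (HConj a b))))"
    let ?H = "{HConj (NN a) (NN b)}"
    have nna: "nd G ?H (NN a)"
      by (rule nd_conjE1[of _ _ _ "NN b"]) (simp add: nd.hyp)
    have nnb: "nd G ?H (NN b)"
      by (rule nd_conjE2[of _ _ "NN a"]) (simp add: nd.hyp)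
    have "nd G ?H (NN (HImp b (HConj a b)))"
      using nna by (rule nd.mp[OF nd.qh[OF nna_nnab]])
    with nnb show "nd G ?H (NN (HConj a b))"
      by (rule nd.mp[OF nd.mp[OF nd.qh[OF nn_imp]], rotated])
  qed
qed

lemma nn_disj: "qh_deriv G (HIff (NN (HDisj a b)) (NN (HDisj (NN a) (NN b))))"
proof (rule qh_conjI)
  have inj1: "qh_deriv G (HImp a (HDisj a b))" and inj2: "qh_deriv G (HImp b (HDisj a b))"
    for a b :: "'a hform"
    by (rule qh_deriv.ax, rule hax.intros)+
  have "qh_deriv G (HImp (HDisj a b) (HDisj (NN a) (NN b)))"
    by (rule qh_disjE[OF qh_trans[OF dn_intro inj1] qh_trans[OF dn_intro inj2]])
  then show "qh_deriv G (HImp (NN (HDisj a b)) (NN (HDisj (NN a) (NN b))))"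
    by (rule qh_nn_mono)
  have "qh_deriv G (HImp (HDisj (NN a) (NN b)) (NN (HDisj a b)))"
    by (rule qh_disjE[OF qh_nn_mono[OF inj1] qh_nn_mono[OF inj2]])
  then show "qh_deriv G (HImp (NN (HDisj (NN a) (NN b))) (NN (HDisj a b)))"
    by (rule nn_stable_elim[OF nn_stable_NN])
qed

lemma nn_ex: "qh_deriv G (HIff (NN (HEx x a)) (NN (HEx x (NN a))))"
proof (rule qh_conjI)
  have "qh_deriv G (HImp (HEx x a) (HEx x (NN a)))"
    by (rule qh_deriv.ex[OF qh_trans[OF dn_intro ex_inst]]) simp
  then show "qh_deriv G (HImp (NN (HEx x a)) (NN (HEx x (NN a))))"
    by (rule qh_nn_mono)
  have "qh_deriv G (HImp (HEx x (NN a)) (NN (HEx x a)))"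
    by (rule qh_deriv.ex[OF qh_nn_mono[OF ex_inst]]) simp
  then show "qh_deriv G (HImp (NN (HEx x (NN a))) (NN (HEx x a)))"
    by (rule nn_stable_elim[OF nn_stable_NN])
qed

lemma nn_all: "qh_deriv G (HImp (NN (HAll x a)) (HAll x (NN a)))"
  by (rule qh_deriv.all[OF qh_nn_mono[OF all_inst]]) simp

text \<open>Elimination rules for the translated classical \<or> and \<exists>: they are valid
  whenever the conclusion is stable.\<close>

lemma nn_disj_elim:
  assumes "nn_stable G r"
  shows "qh_deriv G (HImp (HImp p r) (HImp (HImp q r) (HImp (NN (HDisj p q)) r)))"
proof (intro qh_impI nd_impI)
  let ?H = "{NN (HDisj p q), HImp q r, HImp p r}"
  have "nd G ?H (HImp (HDisj p q) r)"
    by (rule nd.mp[OF nd.mp[OF nd_ax[OF hax.intros(8)]]]) (simp_all add: nd.hyp)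
  then have "nd G ?H (NN r)"
    by (rule nd_nn_mono) (simp add: nd.hyp)
  then show "nd G ?H r"
    by (rule nd_stable[OF assms])
qed

lemma nn_ex_elim:
  assumes "nn_stable G c" and "qh_deriv G (HImp b c)" and "x \<notin> fvH c"
  shows "qh_deriv G (HImp (NN (HEx x b)) c)"
  using assms(1) qh_deriv.ex[OF assms(2,3)] by (rule nn_stable_elim)

section \<open>The translation\<close>

text \<open>The translation commutes with free variables, substitution and the free-for
  condition, so instances of the quantifier axioms translate to instances.\<close>

lemma fv_nn:
  fixes p :: "('a, 'b) qprop" and a :: "('a, 'b) qprob"
  shows "fvH (nnP p) = fvP p" "fvH (nnQ a) = fvQ a"
  by (induct p and a) auto

lemma subst_nn:
  fixes p :: "('a, 'b) qprop" and a :: "('a, 'b) qprob"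
  shows "nnP (substP x y p) = substH x y (nnP p)" "nnQ (substQ x y a) = substH x y (nnQ a)"
  by (induct p and a) (auto simp: HNeg_def)

lemma freefor_nn:
  fixes p :: "('a, 'b) qprop" and a :: "('a, 'b) qprob"
  shows "freeforH y x (nnP p) = freeforP y x p" "freeforH y x (nnQ a) = freeforQ y x a"
  by (induct p and a) (auto simp: HNeg_def fv_nn)

text \<open>Every translated proposition is stable: atoms, \<or>, \<exists> and ? carry a double
  negation, and stability is preserved by \<and>, \<rightarrow> and \<forall>.\<close>

lemma nn_stable_nnP: "nn_stable G (nnP p)"
proof (induction p)
  case Zero
  show ?case by (simp add: nn_stable_bot)
next
  case (PConj p q)
  then show ?case by (simp add: nn_stable_conj)
next
  case (PImp p q)
  then show ?case by (simp add: nn_stable_imp)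
next
  case (PAll x p)
  then show ?case by (simp add: nn_stable_all)
qed (simp_all add: nn_stable_NN)

text \<open>The axioms of classical logic translate to QH theorems; the classical ones
  (\<or>-elimination and double negation elimination) hold by stability.\<close>

lemma cax_nn:
  assumes "cax p"
  shows "qh_deriv G (nnP p)"
  using assms
proof cases
  case (6 p q)
  then show ?thesis by (simp add: qh_trans[OF _ dn_intro] qh_deriv.ax hax.intros)
next
  case (7 q p)
  then show ?thesis by (simp add: qh_trans[OF _ dn_intro] qh_deriv.ax hax.intros)
next
  case (8 p r q)
  then show ?thesis by (simp add: nn_disj_elim nn_stable_nnP)
next
  case (10 p)
  then show ?thesis
    using nn_stable_nnP by (simp add: PNeg_def nn_stable_def HNeg_def[symmetric])
next
  case (12 y x p)
  then show ?thesis by (simp add: subst_nn freefor_nn qh_trans[OF ex_ax dn_intro])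
qed (auto simp: subst_nn freefor_nn all_ax intro: qh_deriv.ax hax.intros)

lemma iax_nn: "iax a \<Longrightarrow> qh_deriv G (nnQ a)"
  by (induction rule: iax.induct)
     (auto simp: subst_nn freefor_nn all_ax ex_ax intro: qh_deriv.ax hax.intros)

text \<open>The mixed QHC schemas translate to stability, double negation introduction,
  the identity, and the commutation laws for double negation.\<close>

lemma qhcax_nn: "qhcax A \<Longrightarrow> qh_deriv G (nnF A)"
  by (induction rule: qhcax.induct)
     (simp_all add: PIff_def qh_id dn_intro nn_imp nn_conj nn_disj nn_ex nn_all
                    nn_stable_nnP[unfolded nn_stable_def] nn_stable_bot[unfolded nn_stable_def])

theorem theorem3p4:
  fixes As :: "('a, 'b) form list" and A :: "('a, 'b) form"
  assumes "qhc_deriv (set As) A"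
  shows "qh_deriv (nnF ` set As) (nnF A)"
  using assms
proof (induction rule: qhc_deriv.induct)
  case (cax p)
  then show ?case by (simp add: cax_nn)
next
  case (iax a)
  then show ?case by (simp add: iax_nn)
next
  case (qhcax A)
  then show ?case by (rule qhcax_nn)
next
  case (exP q p x)
  then show ?case by (simp add: nn_ex_elim nn_stable_nnP fv_nn)
next
  case (quest a)
  then show ?case by (simp add: qh_dn_intro)
qed (auto intro: qh_deriv.intros simp: fv_nn)

end
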